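(* For all sufficiently large $R$ the following holds. Let $V\subset\mathcal D_R$ be finite, $G_V$ the graph on $V$ in which distinct points are adjacent iff their hyperbolic distance is at most $R$, and let $N(T)$ and $D_{i,j}$ be computed from $V$. For every admissible $(i,j)$, the subgraph of $G_V$ induced by the points of $V$ lying in tiles below $T_{i,j}$ (including $T_{i,j}$) can be covered by at most $D_{i,j}+1$ vertex-disjoint cycles and isolated vertices. Moreover, if $i>0$ and $D_{i,j}=0$, then this subgraph can be covered by exactly one cycle, and this cycle has at least one edge with both endpoints in $T_{i,j}$.
   Context: $\mathcal D_R$ is the hyperbolic disk (curvature $-1$) of radius $R$ around the origin, with polar coordinates $(r,\theta)$, $r\in[0,R)$, $\theta\in(0,2\pi]$. Tiling: $i_{\max}=\lceil 0.9R/(2\ln 2)\rceil$, $n_i=2^{4-i+\lfloor R/(2\ln 2)\rfloor}$ for integers $0\le i\le i_{\max}$; $(i,j)$ is admissible if $0\le i\le i_{\max}$, $0\le j<n_i$; $T_{i,j}=\{(r,\theta)\in\mathcal D_R:\ R-2(i+1)\ln 2\le r<R-2i\ln 2,\ 2\pi j/n_i<\theta\le 2\pi(j+1)/n_i\}$. A tile $T_{i',j'}$ is below $T_{i,j}$ if $i'\le i$ and $T_{i',j'}$ is contained in the sector $\{(r,\theta): 2\pi j/n_i<\theta\le 2\pi(j+1)/n_i\}$. For a point set $V$, $N(T_{i,j})=|V\cap T_{i,j}|$. Demands: $D_{0,j}=N(T_{0,j})$ if $N(T_{0,j})\in\{1,2\}$ and $D_{0,j}=0$ otherwise; for $0<i\le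 i_{\max}$, $D_{i,j}=\max\{D_{i-1,2j}+D_{i-1,2j+1}+3-N(T_{i,j}),0\}$. A graph $H$ is covered by $k$ vertex-disjoint cycles and isolated vertices if its vertex set can be partitioned into $k$ parts, each either a single vertex or the vertex set of a cycle (of length at least $3$) in $H$. *)

theory Defs
  imports Complex_Main "HOL-Library.Disjoint_Sets"
begin

(* Points of the hyperbolic plane in polar coordinates (r, theta). *)
type_synonym hpoint = "real \<times> real"

definition disk :: "real \<Rightarrow> hpoint set" where
  "disk R = {(r, \<theta>). 0 \<le> r \<and> r < R \<and> 0 < \<theta> \<and> \<theta> \<le> 2 * pi}"

(* hyperbolic distance (curvature -1) via the hyperbolic law of cosines *)
definition hdist :: "hpoint \<Rightarrow> hpoint \<Rightarrow> real" where
  "hdist p q = arcosh (cosh (fst p) * cosh (fst q)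
                       - sinh (fst p) * sinh (fst q) * cos (snd p - snd q))"

definition imax :: "real \<Rightarrow> nat" where
  "imax R = nat \<lceil>0.9 * R / (2 * ln 2)\<rceil>"

definition ntiles :: "real \<Rightarrow> nat \<Rightarrow> real" where
  "ntiles R i = (2::real) powi (4 - int i + \<lfloor>R / (2 * ln 2)\<rfloor>)"

definition admissible :: "real \<Rightarrow> nat \<Rightarrow> nat \<Rightarrow> bool" where
  "admissible R i j \<longleftrightarrow> i \<le> imax R \<and> real j < ntiles R i"

definition sector :: "real \<Rightarrow> nat \<Rightarrow> nat \<Rightarrow> hpoint set" where
  "sector R i j = {(r, \<theta>). 2 * pi * j / ntiles R i < \<theta> \<and> \<theta> \<le> 2 * pi * (j + 1) / ntiles R i}"

definition tile :: "real \<Rightarrow> nat \<Rightarrow> nat \<Rightarrow> hpoint set" where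
  "tile R i j = {(r, \<theta>) \<in> disk R. R - 2 * (i + 1) * ln 2 \<le> r \<and> r < R - 2 * i * ln 2}
                \<inter> sector R i j"

definition below :: "real \<Rightarrow> nat \<Rightarrow> nat \<Rightarrow> nat \<Rightarrow> nat \<Rightarrow> bool" where
  "below R i' j' i j \<longleftrightarrow> i' \<le> i \<and> tile R i' j' \<subseteq> sector R i j"

definition below_points :: "real \<Rightarrow> hpoint set \<Rightarrow> nat \<Rightarrow> nat \<Rightarrow> hpoint set" where
  "below_points R V i j =
     V \<inter> (\<Union>{tile R i' j' | i' j'. admissible R i' j' \<and> below R i' j' i j})"

definition Ncount :: "real \<Rightarrow> hpoint set \<Rightarrow> nat \<Rightarrow> nat \<Rightarrow> int" where
  "Ncount R V i j = int (card (V \<inter> tile R i j))"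

fun demand :: "real \<Rightarrow> hpoint set \<Rightarrow> nat \<Rightarrow> nat \<Rightarrow> int" where
  "demand R V 0 j = (if Ncount R V 0 j \<in> {1, 2} then Ncount R V 0 j else 0)"
| "demand R V (Suc i) j =
     max (demand R V i (2 * j) + demand R V i (2 * j + 1) + 3 - Ncount R V (Suc i) j) 0"

definition adjG :: "real \<Rightarrow> hpoint \<Rightarrow> hpoint \<Rightarrow> bool" where
  "adjG R p q \<longleftrightarrow> p \<noteq> q \<and> hdist p q \<le> R"

definition is_cycle :: "('a \<Rightarrow> 'a \<Rightarrow> bool) \<Rightarrow> 'a set \<Rightarrow> 'a list \<Rightarrow> bool" where
  "is_cycle adj S xs \<longleftrightarrow> distinct xs \<and> length xs \<ge> 3 \<and> set xs \<subseteq> S \<and>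
     (\<forall>k < length xs. adj (xs ! k) (xs ! ((k + 1) mod length xs)))"

definition covered_by :: "('a \<Rightarrow> 'a \<Rightarrow> bool) \<Rightarrow> 'a set \<Rightarrow> nat \<Rightarrow> bool" where
  "covered_by adj S k \<longleftrightarrow> (\<exists>P. partition_on S P \<and> finite P \<and> card P = k \<and>
     (\<forall>C \<in> P. (\<exists>v. C = {v}) \<or> (\<exists>xs. is_cycle adj S xs \<and> set xs = C)))"

end

theory Submission
  imports Defs
begin

text \<open>
  Every point of a tile T_{i,j} is within distance R of every point in a tile below it:
  radially the two points differ by at most 2(i+1) ln 2 \<le> 0.9 R + 4, and angularly by at
  most 2\<pi>/n_i, which is small because n_i 2^i \<ge> 8 e^{R/2}. Hence the points of V \<inter> T_{i,j}
  are universal vertices of the subgraph below T_{i,j}.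
  The cover is built by induction on i: the covers of the two children are put side by side,
  and the N(T_{i,j}) universal vertices are interleaved with up to that many of their
  components, splicing them into a single cycle. This saves exactly what the demand recursion
  records; when D_{i,j} = 0 every component is absorbed and the resulting cycle starts and
  ends in T_{i,j}.
\<close>

section \<open>Covers by cycles and isolated vertices\<close>

fun interleave :: "'a list \<Rightarrow> 'a list list \<Rightarrow> 'a list" where
  "interleave (t # ts) (p # ps) = t # p @ interleave ts ps"
| "interleave ts [] = ts"
| "interleave [] ps = concat ps"

lemma set_interleave: "set (interleave ts ps) = set ts \<union> set (concat ps)"
  by (induction ts ps rule: interleave.induct) auto

lemma distinct_interleave: "distinct (ts @ concat ps) \<Longrightarrow> distinct (interleave ts ps)"
  by (induction ts ps rule: interleave.induct) (auto simp: set_interleave)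

lemma length_interleave: "length (interleave ts ps) = length ts + length (concat ps)"
  by (induction ts ps rule: interleave.induct) auto

lemma hd_interleave: "ts \<noteq> [] \<Longrightarrow> hd (interleave ts ps) = hd ts"
  by (cases ts; cases ps) auto

lemma last_interleave: "length ps < length ts \<Longrightarrow> last (interleave ts ps) \<in> set ts"
proof (induction ts ps rule: interleave.induct)
  case (1 t ts p ps)
  then have "interleave ts ps \<noteq> []"
    using length_interleave[of ts ps] by auto
  with 1 show ?case by simp
qed auto

lemma length_le_length_concat: "[] \<notin> set ps \<Longrightarrow> length ps \<le> length (concat ps)"
proof (induction ps)
  case (Cons p ps)
  then have "1 \<le> length p"
    by (cases p) auto
  with Cons show ?case
    by simp
qed simp

lemma last_neq_hd: "distinct xs \<Longrightarrow> 2 \<le> length xs \<Longrightarrow> last xs \<noteq> hd xs"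
  by (cases xs rule: remdups_adj.cases) auto

definition universal_on :: "('a \<Rightarrow> 'a \<Rightarrow> bool) \<Rightarrow> 'a set \<Rightarrow> 'a set \<Rightarrow> bool" where
  "universal_on adj T U \<longleftrightarrow> (\<forall>t\<in>T. \<forall>x\<in>U. x \<noteq> t \<longrightarrow> adj t x \<and> adj x t)"

lemma successively_universal:
  assumes "universal_on adj T U" "set xs \<subseteq> T" "set xs \<subseteq> U" "distinct xs"
  shows "successively adj xs"
  using assms unfolding successively_conv_nth universal_on_def
  by (metis Suc_lessD distinct_conv_nth n_not_Suc_n nth_mem subsetD)

lemma successively_interleave:
  assumes "universal_on adj T U" "set ts \<subseteq> T" "set ts \<union> set (concat ps) \<subseteq> U"
    "distinct (ts @ concat ps)" "\<forall>p\<in>set ps. p \<noteq> [] \<and> successively adj p"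
    "length ps \<le> length ts"
  shows "successively adj (interleave ts ps)"
  using assms
proof (induction ts ps rule: interleave.induct)
  case (1 t ts p ps)
  have "p \<noteq> []" "successively adj p"
    using "1.prems"(5) by auto
  have "hd p \<in> set p"
    using \<open>p \<noteq> []\<close> by simp
  then have "hd p \<in> U" "hd p \<noteq> t"
    using "1.prems"(3,4) by auto
  then have "adj t (hd p)"
    using "1.prems"(1,2) unfolding universal_on_def by simp
  moreover have "adj (last p) (hd ts)" if "ts \<noteq> []"
  proof -
    have "last p \<in> set p" "hd ts \<in> set ts"
      using \<open>p \<noteq> []\<close> that by simp_all
    then have "hd ts \<in> T" "last p \<in> U" "last p \<noteq> hd ts"
      using "1.prems"(2-4) by auto
    then show ?thesis
      using "1.prems"(1) unfolding universal_on_def by simp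
  qed
  moreover have "successively adj (interleave ts ps)"
  proof (rule "1.IH")
    show "set ts \<subseteq> T" "set ts \<union> set (concat ps) \<subseteq> U" "distinct (ts @ concat ps)"
      "\<forall>p\<in>set ps. p \<noteq> [] \<and> successively adj p" "length ps \<le> length ts"
      using "1.prems"(2-6) by auto
  qed fact
  moreover have "ts = [] \<Longrightarrow> ps = []"
    using "1.prems"(6) by simp
  ultimately show ?case
    using \<open>p \<noteq> []\<close> \<open>successively adj p\<close> hd_interleave[of ts ps]
    by (cases "ts = []") (simp_all add: successively_Cons successively_append_iff)
next
  case (2 ts)
  then show ?case
    using successively_universal[of adj T U ts] by simp
qed simp

definition cycle_or_vertex :: "('a \<Rightarrow> 'a \<Rightarrow> bool) \<Rightarrow> 'a list \<Rightarrow> bool" where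
  "cycle_or_vertex adj xs \<longleftrightarrow>
     (\<exists>v. xs = [v]) \<or> (3 \<le> length xs \<and> successively adj xs \<and> adj (last xs) (hd xs))"

definition cycle_cover :: "('a \<Rightarrow> 'a \<Rightarrow> bool) \<Rightarrow> 'a set \<Rightarrow> 'a list list \<Rightarrow> bool" where
  "cycle_cover adj S Ls \<longleftrightarrow>
     (\<forall>xs\<in>set Ls. cycle_or_vertex adj xs) \<and> distinct (concat Ls) \<and> set (concat Ls) = S"

lemma cycle_or_vertex_path:
  "cycle_or_vertex adj xs \<Longrightarrow> xs \<noteq> [] \<and> successively adj xs"
  unfolding cycle_or_vertex_def by auto

lemma cycle_or_vertex_interleave:
  assumes "universal_on adj T U" "set ts \<subseteq> T" "set ts \<union> set (concat ps) \<subseteq> U"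
    "distinct (ts @ concat ps)" "\<forall>p\<in>set ps. cycle_or_vertex adj p"
    "length ps \<le> length ts" "3 \<le> length ts + length ps"
  shows "cycle_or_vertex adj (interleave ts ps)"
proof -
  let ?xs = "interleave ts ps"
  have paths: "\<forall>p\<in>set ps. p \<noteq> [] \<and> successively adj p"
    using assms(5) cycle_or_vertex_path by blast
  then have "length ps \<le> length (concat ps)"
    by (intro length_le_length_concat) blast
  then have len: "3 \<le> length ?xs"
    using assms(7) by (simp add: length_interleave)
  have "ts \<noteq> []"
    using assms(6,7) by auto
  then have "hd ?xs \<in> T"
    using assms(2) by (auto simp: hd_interleave)
  moreover have "last ?xs \<in> U"
    using assms(3) len last_in_set[of ?xs] set_interleave[of ts ps] by force
  moreover have "last ?xs \<noteq> hd ?xs"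
    using distinct_interleave[OF assms(4)] len by (intro last_neq_hd) auto
  ultimately have "adj (last ?xs) (hd ?xs)"
    using assms(1) unfolding universal_on_def by blast
  moreover have "successively adj ?xs"
    by (rule successively_interleave[OF assms(1-4) paths assms(6)])
  ultimately show ?thesis
    using len unfolding cycle_or_vertex_def by blast
qed

definition single_cycle_through :: "'a set \<Rightarrow> 'a list list \<Rightarrow> bool" where
  "single_cycle_through T Ls \<longleftrightarrow> (\<exists>xs. Ls = [xs] \<and> 3 \<le> length xs \<and> hd xs \<in> T \<and> last xs \<in> T)"

lemma cycle_cover_absorb:
  assumes cover: "cycle_cover adj S L" and "finite T" "T \<inter> S = {}"
    and univ: "universal_on adj T (T \<union> S)"
    and big: "3 \<le> card T \<or> (card T = 2 \<and> L \<noteq> [])"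
  shows "\<exists>Ls. cycle_cover adj (T \<union> S) Ls \<and> length Ls = 1 + length L - min (card T) (length L) \<and>
    (length L < card T \<longrightarrow> single_cycle_through T Ls)"
proof -
  obtain ts where ts: "set ts = T" "distinct ts"
    using finite_distinct_list[OF \<open>finite T\<close>] by blast
  have card: "card T = length ts"
    using ts distinct_card by metis
  define m where "m = min (card T) (length L)"
  define xs where "xs = interleave ts (take m L)"
  have L: "\<forall>p\<in>set L. cycle_or_vertex adj p" "distinct (concat L)" "set (concat L) = S"
    using cover unfolding cycle_cover_def by auto
  have split: "concat L = concat (take m L) @ concat (drop m L)"
    by (metis append_take_drop_id concat_append)
  have dist: "distinct (ts @ concat (take m L) @ concat (drop m L))"
    using L(2,3) ts \<open>T \<inter> S = {}\<close> split by auto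
  have set_xs: "set xs = T \<union> set (concat (take m L))"
    unfolding xs_def by (simp add: set_interleave ts)
  have "cycle_or_vertex adj xs"
    unfolding xs_def
  proof (rule cycle_or_vertex_interleave[OF univ])
    show "set ts \<union> set (concat (take m L)) \<subseteq> T \<union> S"
      using ts L(3) split by auto
    show "distinct (ts @ concat (take m L))"
      using dist by auto
    show "\<forall>p\<in>set (take m L). cycle_or_vertex adj p"
      using L(1) by (auto dest: in_set_takeD)
    show "length (take m L) \<le> length ts" "3 \<le> length ts + length (take m L)"
      using big card unfolding m_def by (auto simp: Suc_le_eq)
  qed (use ts in simp)
  then have "cycle_cover adj (T \<union> S) (xs # drop m L)"
    using L ts dist set_xs split distinct_interleave[of ts "take m L"]
    unfolding cycle_cover_def xs_def by (auto dest: in_set_dropD)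
  moreover have "length L < card T \<longrightarrow> single_cycle_through T (xs # drop m L)"
  proof
    assume less: "length L < card T"
    then have "m = length L"
      unfolding m_def by simp
    moreover have "ts \<noteq> []"
      using less card by auto
    ultimately have "hd xs \<in> T" "last xs \<in> T"
      using last_interleave[of "take m L" ts] less card ts
      unfolding xs_def by (auto simp: hd_interleave)
    moreover have "2 \<le> length xs"
      using big card by (auto simp: xs_def length_interleave)
    then have "3 \<le> length xs"
      using \<open>cycle_or_vertex adj xs\<close> unfolding cycle_or_vertex_def by auto
    ultimately show "single_cycle_through T (xs # drop m L)"
      using \<open>m = length L\<close> unfolding single_cycle_through_def by auto
  qed
  ultimately show ?thesis
    unfolding m_def by auto
qed

lemma cycle_cover_add_vertices:
  assumes "cycle_cover adj S L" "finite T" "T \<inter> S = {}"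
  shows "\<exists>Ls. cycle_cover adj (T \<union> S) Ls \<and> length Ls = card T + length L"
proof -
  obtain ts where ts: "set ts = T" "distinct ts"
    using finite_distinct_list[OF \<open>finite T\<close>] by blast
  have "concat (map (\<lambda>t. [t]) ts) = ts"
    by (induction ts) auto
  then have "cycle_cover adj (T \<union> S) (map (\<lambda>t. [t]) ts @ L)"
    using assms ts unfolding cycle_cover_def cycle_or_vertex_def by auto
  moreover have "length (map (\<lambda>t. [t]) ts @ L) = card T + length L"
    using ts distinct_card by fastforce
  ultimately show ?thesis
    by blast
qed

lemma cycle_cover_extend:
  assumes "cycle_cover adj S L" "finite T" "T \<inter> S = {}" "universal_on adj T (T \<union> S)"
    "int (length L) \<le> c + 2" "0 \<le> c"
  shows "\<exists>Ls. cycle_cover adj (T \<union> S) Ls \<and>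
    int (length Ls) \<le> max (c + 3 - int (card T)) 0 + 1 \<and>
    (c + 3 \<le> int (card T) \<longrightarrow> single_cycle_through T Ls)"
proof (cases "3 \<le> card T \<or> (card T = 2 \<and> L \<noteq> [])")
  case True
  with cycle_cover_absorb[OF assms(1-4)] obtain Ls where
    "cycle_cover adj (T \<union> S) Ls" "length Ls = 1 + length L - min (card T) (length L)"
    "length L < card T \<longrightarrow> single_cycle_through T Ls"
    by blast
  with assms(5,6) show ?thesis
    by (intro exI[of _ Ls]) auto
next
  case False
  with cycle_cover_add_vertices[OF assms(1-3)] obtain Ls where
    "cycle_cover adj (T \<union> S) Ls" "length Ls = card T + length L"
    by blast
  with False assms(5,6) show ?thesis
    by (intro exI[of _ Ls]) auto
qed

lemma is_cycle_of_closed_path: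
  assumes "distinct xs" "3 \<le> length xs" "set xs \<subseteq> S"
    "successively adj xs" "adj (last xs) (hd xs)"
  shows "is_cycle adj S xs"
  unfolding is_cycle_def
proof (intro conjI allI impI)
  fix k
  assume k: "k < length xs"
  show "adj (xs ! k) (xs ! ((k + 1) mod length xs))"
  proof (cases "Suc k < length xs")
    case True
    then show ?thesis
      using assms(4) successively_nth by fastforce
  next
    case False
    with k have "k = length xs - 1"
      by simp
    moreover have "xs \<noteq> []"
      using assms(2) by auto
    ultimately show ?thesis
      using assms(5) k by (simp add: last_conv_nth hd_conv_nth)
  qed
qed (use assms in auto)

lemma cycle_cover_covered_by:
  assumes "cycle_cover adj S Ls"
  shows "covered_by adj S (length Ls)"
proof -
  have pieces: "\<forall>xs\<in>set Ls. cycle_or_vertex adj xs"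
    and dist: "distinct (concat Ls)" and S: "set (concat Ls) = S"
    using assms unfolding cycle_cover_def by auto
  have nonempty: "[] \<notin> set Ls"
    using pieces cycle_or_vertex_path by blast
  have disj: "set xs \<inter> set ys = {}" if "xs \<in> set Ls" "ys \<in> set Ls" "xs \<noteq> ys" for xs ys
    using dist that unfolding distinct_concat_iff by blast
  have "distinct Ls"
    using dist nonempty by (simp add: distinct_concat_iff removeAll_id)
  moreover have "inj_on set (set Ls)"
    using disj nonempty by (intro inj_onI) (metis Int_absorb set_empty)
  ultimately have card: "card (set ` set Ls) = length Ls"
    by (simp add: card_image distinct_card)
  have "partition_on S (set ` set Ls)"
    using S disj nonempty unfolding partition_on_def disjoint_def by auto
  moreover have "(\<exists>v. C = {v}) \<or> (\<exists>xs. is_cycle adj S xs \<and> set xs = C)"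
    if C: "C \<in> set ` set Ls" for C
  proof -
    obtain xs where xs: "xs \<in> set Ls" "C = set xs"
      using C by blast
    then consider v where "xs = [v]"
      | "3 \<le> length xs" "successively adj xs" "adj (last xs) (hd xs)"
      using pieces unfolding cycle_or_vertex_def by blast
    then show ?thesis
    proof cases
      case 2
      have "distinct xs" "set xs \<subseteq> S"
        using dist S xs(1) by (auto simp: distinct_concat_iff)
      with 2 xs(2) show ?thesis
        by (blast intro: is_cycle_of_closed_path)
    qed (use xs in auto)
  qed
  ultimately show ?thesis
    unfolding covered_by_def using card by (intro exI[of _ "set ` set Ls"]) auto
qed

lemma single_cycle_through_is_cycle:
  assumes "cycle_cover adj S Ls" "single_cycle_through T Ls"
  shows "\<exists>xs. is_cycle adj S xs \<and> set xs = S \<and>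
    (\<exists>k < length xs. xs ! k \<in> T \<and> xs ! ((k + 1) mod length xs) \<in> T)"
proof -
  obtain xs where xs: "Ls = [xs]" "3 \<le> length xs" "hd xs \<in> T" "last xs \<in> T"
    using assms(2) unfolding single_cycle_through_def by blast
  then have "distinct xs" "set xs = S" "successively adj xs" "adj (last xs) (hd xs)"
    using assms(1) unfolding cycle_cover_def cycle_or_vertex_def by auto
  then have "is_cycle adj S xs"
    using xs(2) by (intro is_cycle_of_closed_path) auto
  have "xs \<noteq> []"
    using xs(2) by auto
  define k where "k = length xs - 1"
  then have "k < length xs" "xs ! k = last xs" "xs ! ((k + 1) mod length xs) = hd xs"
    using \<open>xs \<noteq> []\<close> by (auto simp: last_conv_nth hd_conv_nth)
  with \<open>is_cycle adj S xs\<close> \<open>set xs = S\<close> xs(3,4) show ?thesis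
    by metis
qed

section \<open>Hyperbolic distance\<close>

lemma hdist_sym: "hdist p q = hdist q p"
  unfolding hdist_def by (simp add: cos_diff mult.commute)

lemma cosh_law_arg_eq:
  "cosh r * cosh s - sinh r * sinh s * cos d = cosh (r - s) + sinh r * sinh s * (1 - cos d)"
  for r s d :: real
  using cosh_diff[of r s] by (simp add: algebra_simps)

lemma cosh_le_exp_abs: "cosh x \<le> exp \<bar>x\<bar>" for x :: real
  unfolding cosh_def by (cases "0 \<le> x") (auto simp: field_simps)

lemma exp_half_le_cosh: "exp x / 2 \<le> cosh x" for x :: real
  unfolding cosh_def by (simp add: divide_simps)

lemma sinh_le_exp_half: "sinh x \<le> exp x / 2" for x :: real
  unfolding sinh_def by (simp add: divide_simps)

lemma one_minus_cos_le: "1 - cos x \<le> x\<^sup>2 / 2" for x :: real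
proof -
  have "(sin (x / 2))\<^sup>2 \<le> (x / 2)\<^sup>2"
    using abs_sin_x_le_abs_x[of "x / 2"] by (metis abs_ge_zero power2_abs power_mono)
  then show ?thesis
    using cos_double_sin[of "x / 2"] by (simp add: power_divide)
qed

lemma hdist_le_of_close:
  fixes r s \<theta> \<phi> R :: real
  assumes "0 \<le> r" "0 \<le> s" "\<bar>r - s\<bar> \<le> R - 2" "exp (r + s) * (\<theta> - \<phi>)\<^sup>2 \<le> exp R"
  shows "hdist (r, \<theta>) (s, \<phi>) \<le> R"
proof -
  define A where "A = cosh r * cosh s - sinh r * sinh s * cos (\<theta> - \<phi>)"
  have sinh: "0 \<le> sinh r" "0 \<le> sinh s"
    using assms(1,2) by auto
  have "3 * exp (R - 2) \<le> exp R"
    using exp_ge_add_one_self[of 2] by (simp add: exp_diff field_simps)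
  moreover have "cosh (r - s) \<le> exp (R - 2)"
    using cosh_le_exp_abs[of "r - s"] assms(3) by (meson exp_le_cancel_iff order_trans)
  ultimately have radial: "cosh (r - s) \<le> exp R / 3"
    by simp
  have "sinh r * sinh s * (1 - cos (\<theta> - \<phi>)) \<le> (exp r / 2) * (exp s / 2) * ((\<theta> - \<phi>)\<^sup>2 / 2)"
    using sinh sinh_le_exp_half one_minus_cos_le by (intro mult_mono) auto
  also have "\<dots> = exp (r + s) * (\<theta> - \<phi>)\<^sup>2 / 8"
    by (simp add: exp_add)
  also have "\<dots> \<le> exp R / 8"
    using assms(4) by simp
  finally have angular: "sinh r * sinh s * (1 - cos (\<theta> - \<phi>)) \<le> exp R / 8" .
  have "A \<le> cosh R"
    using radial angular exp_half_le_cosh[of R] exp_gt_zero[of R]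
    unfolding A_def cosh_law_arg_eq by linarith
  moreover have "1 \<le> A"
    using sinh cosh_real_ge_1[of "r - s"] unfolding A_def cosh_law_arg_eq
    by (smt (verit) cos_le_one mult_nonneg_nonneg)
  ultimately have "arcosh A \<le> arcosh (cosh R)"
    using arcosh_less_iff_real[of "cosh R" A] cosh_real_ge_1[of R] by (meson leD leI)
  also have "arcosh (cosh R) = R"
    using assms(3) by (simp add: arcosh_cosh_real)
  finally show ?thesis
    unfolding hdist_def A_def by simp
qed

section \<open>The tiling\<close>

lemma ntiles_pos: "0 < ntiles R i"
  unfolding ntiles_def by simp

lemma ntiles_Suc: "ntiles R i = 2 * ntiles R (Suc i)"
proof -
  have e: "4 - int i + \<lfloor>R / (2 * ln 2)\<rfloor> = (4 - int (Suc i) + \<lfloor>R / (2 * ln 2)\<rfloor>) + 1"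
    by simp
  show ?thesis
    unfolding ntiles_def by (subst e, subst power_int_add_1') auto
qed

lemma ntiles_add: "ntiles R i = 2 ^ d * ntiles R (i + d)"
proof (induction d)
  case (Suc d)
  then show ?case
    using ntiles_Suc[of R "i + d"] by simp
qed simp

lemma imax_le:
  assumes "0 \<le> R"
  shows "real (imax R) \<le> 0.9 * R / (2 * ln 2) + 1"
proof -
  define y where "y = 0.9 * R / (2 * ln 2)"
  have "0 \<le> y"
    using assms unfolding y_def by simp
  then have "real (imax R) = real_of_int \<lceil>y\<rceil>"
    unfolding imax_def y_def by simp
  then show ?thesis
    using ceiling_correct[of y] unfolding y_def by linarith
qed

lemma ntiles_nat:
  assumes "0 \<le> R" "i \<le> imax R"
  shows "\<exists>k. ntiles R i = real k"
proof -
  define z where "z = R / (2 * ln 2)"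
  have "real i \<le> 0.9 * z + 1" "0 \<le> z"
    using imax_le[OF assms(1)] assms unfolding z_def by auto
  moreover have "z < real_of_int \<lfloor>z\<rfloor> + 1"
    by linarith
  ultimately have e: "4 - int i + \<lfloor>z\<rfloor> = int (nat (4 - int i + \<lfloor>z\<rfloor>))"
    by linarith
  have "ntiles R i = real (2 ^ nat (4 - int i + \<lfloor>z\<rfloor>))"
    unfolding ntiles_def z_def[symmetric] by (subst e, subst power_int_of_nat) simp
  then show ?thesis
    by blast
qed

lemma ntiles_lower: "8 * exp (R / 2) \<le> ntiles R i * 2 ^ i"
proof -
  define z where "z = R / (2 * ln 2)"
  have "(3 + z) * ln 2 = 3 * ln 2 + R / 2"
    unfolding z_def by (simp add: field_simps)
  then have "2 powr (3 + z) = exp (3 * ln 2) * exp (R / 2)"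
    by (simp add: powr_def exp_add)
  moreover have "exp (3 * ln 2) = (8::real)"
    using exp_of_nat_mult[of 3 "ln (2::real)"] by simp
  ultimately have "8 * exp (R / 2) = 2 powr (3 + z)"
    by simp
  also have "\<dots> \<le> 2 powr real_of_int (4 + \<lfloor>z\<rfloor>)"
    by (intro powr_mono) linarith+
  also have "\<dots> = ntiles R 0"
    unfolding ntiles_def z_def by (subst powr_real_of_int') auto
  also have "\<dots> = ntiles R i * 2 ^ i"
    using ntiles_add[of R 0 i] by simp
  finally show ?thesis .
qed

lemma mem_sector:
  "p \<in> sector R i j \<longleftrightarrow>
     2 * pi * real j / ntiles R i < snd p \<and> snd p \<le> 2 * pi * (real j + 1) / ntiles R i"
  by (cases p) (simp add: sector_def add.commute)

lemma sector_Suc: "sector R (Suc i) j = sector R i (2 * j) \<union> sector R i (2 * j + 1)"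
proof -
  have n: "ntiles R i = 2 * ntiles R (Suc i)" "0 < ntiles R (Suc i)"
    by (rule ntiles_Suc, rule ntiles_pos)
  show ?thesis
    unfolding set_eq_iff Un_iff mem_sector n(1) using n(2)
    by (auto simp: field_simps)
qed

lemma sector_subset_ancestor: "sector R i j \<subseteq> sector R (i + d) (j div 2 ^ d)"
proof (induction d)
  case (Suc d)
  define k where "k = j div 2 ^ d"
  have "j div 2 ^ Suc d = k div 2"
    unfolding k_def by (simp only: power_Suc2 div_mult2_eq)
  moreover have "k = 2 * (k div 2) \<or> k = 2 * (k div 2) + 1"
    by presburger
  ultimately have "j div 2 ^ d = 2 * (j div 2 ^ Suc d) \<or> j div 2 ^ d = 2 * (j div 2 ^ Suc d) + 1"
    unfolding k_def by simp
  then have "sector R (i + d) (j div 2 ^ d) \<subseteq> sector R (Suc (i + d)) (j div 2 ^ Suc d)"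
    unfolding sector_Suc by (elim disjE) (metis Un_upper1 Un_upper2)+
  with Suc.IH show ?case
    by (metis add_Suc_right order_trans)
qed simp

lemma sector_unique: "p \<in> sector R i j \<Longrightarrow> p \<in> sector R i m \<Longrightarrow> j = m"
proof -
  assume "p \<in> sector R i j" "p \<in> sector R i m"
  then have "2 * pi * real j / ntiles R i < 2 * pi * (real m + 1) / ntiles R i"
    "2 * pi * real m / ntiles R i < 2 * pi * (real j + 1) / ntiles R i"
    unfolding mem_sector by linarith+
  then have "real j < real m + 1" "real m < real j + 1"
    using ntiles_pos[of R i] pi_gt_zero by (simp_all add: divide_less_cancel)
  then show "j = m"
    by linarith
qed

lemma sector_nest:
  assumes "i' \<le> i" "p \<in> sector R i' j'" "p \<in> sector R i m"
  shows "sector R i' j' \<subseteq> sector R i m"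
proof -
  have "sector R i' j' \<subseteq> sector R i (j' div 2 ^ (i - i'))"
    using sector_subset_ancestor[of R i' j' "i - i'"] assms(1) by simp
  moreover from this have "j' div 2 ^ (i - i') = m"
    using assms(2,3) sector_unique by blast
  ultimately show ?thesis
    by simp
qed

lemma mem_tile:
  "p \<in> tile R i j \<longleftrightarrow> p \<in> disk R \<and> R - 2 * (real i + 1) * ln 2 \<le> fst p \<and>
     fst p < R - 2 * real i * ln 2 \<and> p \<in> sector R i j"
  by (cases p) (simp add: tile_def)

lemma mem_disk: "p \<in> disk R \<longleftrightarrow> 0 \<le> fst p \<and> fst p < R \<and> 0 < snd p \<and> snd p \<le> 2 * pi"
  by (cases p) (simp add: disk_def)

lemma mem_below_points:
  assumes "p \<in> below_points R V i j"
  shows "p \<in> V" "p \<in> disk R" "p \<in> sector R i j" "R - 2 * (real i + 1) * ln 2 \<le> fst p"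
proof -
  obtain i' j' where p: "p \<in> V" "i' \<le> i" "tile R i' j' \<subseteq> sector R i j" "p \<in> tile R i' j'"
    using assms unfolding below_points_def below_def by blast
  then show "p \<in> V" "p \<in> sector R i j"
    by blast+
  have "R - 2 * (real i + 1) * ln 2 \<le> R - 2 * (real i' + 1) * ln 2"
    using p(2) by simp
  moreover have "R - 2 * (real i' + 1) * ln 2 \<le> fst p" "p \<in> disk R"
    using p(4) unfolding mem_tile by blast+
  ultimately show "p \<in> disk R" "R - 2 * (real i + 1) * ln 2 \<le> fst p"
    by linarith+
qed

lemma tile_subset_below_points: "admissible R i j \<Longrightarrow> V \<inter> tile R i j \<subseteq> below_points R V i j"
  unfolding below_points_def below_def tile_def by blast

lemma below_points_mono:
  assumes "i \<le> i2" "sector R i j \<subseteq> sector R i2 j2"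
  shows "below_points R V i j \<subseteq> below_points R V i2 j2"
  using assms unfolding below_points_def below_def by fastforce

lemma tile_same_level: "p \<in> tile R i j' \<Longrightarrow> p \<in> sector R i j \<Longrightarrow> p \<in> tile R i j"
  using sector_unique unfolding mem_tile by blast

lemma below_points_0: "admissible R 0 j \<Longrightarrow> below_points R V 0 j = V \<inter> tile R 0 j"
  using tile_subset_below_points[of R 0 j V] tile_same_level[of _ R 0]
  unfolding below_points_def below_def by blast

lemma below_points_Suc:
  assumes "admissible R (Suc i) j"
  shows "below_points R V (Suc i) j =
    V \<inter> tile R (Suc i) j \<union> below_points R V i (2 * j) \<union> below_points R V i (2 * j + 1)"
proof (intro equalityI subsetI)
  fix p
  assume "p \<in> below_points R V (Suc i) j"
  then obtain i' j' where p: "p \<in> V" "admissible R i' j'" "i' \<le> Suc i"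
    "tile R i' j' \<subseteq> sector R (Suc i) j" "p \<in> tile R i' j'"
    unfolding below_points_def below_def by blast
  then have "p \<in> sector R (Suc i) j" "p \<in> sector R i' j'"
    using mem_tile[of p R i' j'] by blast+
  show "p \<in> V \<inter> tile R (Suc i) j \<union> below_points R V i (2 * j) \<union> below_points R V i (2 * j + 1)"
  proof (cases "i' = Suc i")
    case True
    then show ?thesis
      using p tile_same_level \<open>p \<in> sector R (Suc i) j\<close> by blast
  next
    case False
    obtain k where k: "k = 2 * j \<or> k = 2 * j + 1" "p \<in> sector R i k"
      using \<open>p \<in> sector R (Suc i) j\<close> unfolding sector_Suc by blast
    have "i' \<le> i"
      using False p(3) by simp
    then have "tile R i' j' \<subseteq> sector R i k"
      using sector_nest[OF _ \<open>p \<in> sector R i' j'\<close> k(2)] unfolding tile_def by blast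
    then have "p \<in> below_points R V i k"
      using p \<open>i' \<le> i\<close> unfolding below_points_def below_def by blast
    with k(1) show ?thesis
      by blast
  qed
next
  fix p
  assume "p \<in> V \<inter> tile R (Suc i) j \<union> below_points R V i (2 * j) \<union> below_points R V i (2 * j + 1)"
  moreover have "below_points R V i k \<subseteq> below_points R V (Suc i) j" if "k = 2 * j \<or> k = 2 * j + 1" for k
    using that by (intro below_points_mono) (auto simp: sector_Suc)
  ultimately show "p \<in> below_points R V (Suc i) j"
    using tile_subset_below_points[OF assms] by blast
qed

lemma admissible_children:
  assumes "0 \<le> R" "admissible R (Suc i) j"
  shows "admissible R i (2 * j)" "admissible R i (2 * j + 1)"
proof -
  have "Suc i \<le> imax R" "real j < ntiles R (Suc i)"
    using assms(2) unfolding admissible_def by auto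
  moreover obtain k :: nat where "ntiles R (Suc i) = real k"
    using ntiles_nat[OF assms(1) \<open>Suc i \<le> imax R\<close>] by blast
  ultimately have "real (2 * j + 1) < ntiles R i"
    using ntiles_Suc[of R i] by simp
  then show "admissible R i (2 * j)" "admissible R i (2 * j + 1)"
    using \<open>Suc i \<le> imax R\<close> unfolding admissible_def by auto
qed

lemma tile_Suc_disjoint_below_points: "tile R (Suc i) j \<inter> below_points R V i k = {}"
proof -
  have "fst p < R - 2 * (real i + 1) * ln 2" if "p \<in> tile R (Suc i) j" for p
    using that unfolding mem_tile by (simp add: algebra_simps)
  moreover have "R - 2 * (real i + 1) * ln 2 \<le> fst p" if "p \<in> below_points R V i k" for p
    using that by (rule mem_below_points(4))
  ultimately show ?thesis
    by (meson disjoint_iff not_le)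
qed

lemma below_points_children_disjoint:
  "below_points R V i (2 * j) \<inter> below_points R V i (2 * j + 1) = {}"
proof -
  have False if "p \<in> below_points R V i (2 * j)" "p \<in> below_points R V i (2 * j + 1)" for p
  proof -
    have "2 * j = 2 * j + 1"
      using mem_below_points(3)[OF that(1)] mem_below_points(3)[OF that(2)] by (rule sector_unique)
    then show False
      by simp
  qed
  then show ?thesis
    by blast
qed

lemma sector_width:
  assumes "p \<in> sector R i j" "q \<in> sector R i j"
  shows "\<bar>snd p - snd q\<bar> \<le> 2 * pi / ntiles R i"
proof -
  have "2 * pi * (real j + 1) / ntiles R i = 2 * pi * real j / ntiles R i + 2 * pi / ntiles R i"
    by (simp add: distrib_left add_divide_distrib)
  with assms show ?thesis
    unfolding mem_sector abs_le_iff by linarith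
qed

lemma tile_angle_estimate:
  fixes r s d n R :: real and i :: nat
  assumes "r + 2 * real i * ln 2 \<le> R" "s \<le> R" "\<bar>d\<bar> \<le> 2 * pi / n" "0 < n"
    "8 * exp (R / 2) \<le> n * 2 ^ i"
  shows "exp (r + s) * d\<^sup>2 \<le> exp R"
proof -
  define q :: real where "q = 2 ^ i"
  define m where "m = n * q"
  have "exp (real i * ln 2) = exp (ln 2) ^ i"
    by (rule exp_of_nat_mult)
  then have q: "exp (real i * ln 2) = q" "0 < q"
    unfolding q_def by simp_all
  have "exp (r + 2 * real i * ln 2) = exp r * exp (real i * ln 2) ^ 2"
    by (simp only: exp_add mult.assoc exp_double)
  then have "exp r * q\<^sup>2 = exp (r + 2 * real i * ln 2)"
    using q(1) by simp
  also have "\<dots> \<le> exp R"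
    using assms(1) by simp
  finally have radial: "exp r * q\<^sup>2 \<le> exp R" .
  have "\<bar>d\<bar> * n \<le> 2 * pi"
    using assms(3,4) by (simp add: pos_le_divide_eq)
  then have "\<bar>d\<bar> * m \<le> 2 * pi * q"
    unfolding m_def using q(2) by (metis mult.assoc mult_right_mono less_imp_le)
  then have "(\<bar>d\<bar> * m)\<^sup>2 \<le> (2 * pi * q)\<^sup>2"
    using assms(4) q(2) by (intro power_mono) (auto simp: m_def)
  then have dm: "d\<^sup>2 * m\<^sup>2 \<le> 4 * pi\<^sup>2 * q\<^sup>2"
    by (simp add: power_mult_distrib)
  have "64 * exp R = (8 * exp (R / 2))\<^sup>2"
    by (simp add: power2_eq_square exp_add[symmetric])
  also have "\<dots> \<le> m\<^sup>2"
    using assms(5) unfolding m_def q_def by (intro power_mono) auto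
  finally have "d\<^sup>2 * (64 * exp R) \<le> d\<^sup>2 * m\<^sup>2"
    by (rule mult_left_mono) simp
  also have "\<dots> \<le> 4 * pi\<^sup>2 * q\<^sup>2"
    by (fact dm)
  also have "\<dots> \<le> 64 * q\<^sup>2"
  proof -
    have "pi\<^sup>2 \<le> 4\<^sup>2"
      using pi_less_4 by (intro power_mono) auto
    then show ?thesis
      by (simp add: mult_right_mono)
  qed
  finally have angular: "d\<^sup>2 * exp R \<le> q\<^sup>2"
    by simp
  have "exp (r + s) * d\<^sup>2 * exp R = exp s * (exp r * (d\<^sup>2 * exp R))"
    by (simp add: exp_add)
  also have "\<dots> \<le> exp R * (exp r * q\<^sup>2)"
    using angular assms(2) by (intro mult_mono) auto
  also have "\<dots> \<le> exp R * exp R"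
    using radial by simp
  finally show ?thesis
    by simp
qed

lemma radial_gap:
  fixes r s R :: real
  assumes "100 \<le> R" "real i \<le> 0.9 * R / (2 * ln 2) + 1"
    "R - 2 * (real i + 1) * ln 2 \<le> r" "r \<le> R" "R - 2 * (real i + 1) * ln 2 \<le> s" "s \<le> R"
  shows "\<bar>r - s\<bar> \<le> R - 2"
proof -
  have "2 * (real i + 1) * ln 2 \<le> 2 * (0.9 * R / (2 * ln 2) + 2) * ln 2"
    using assms(2) by (intro mult_right_mono) auto
  also have "\<dots> = 0.9 * R + 4 * ln 2"
    by (simp add: field_simps)
  also have "\<dots> \<le> R - 2"
    using assms(1) ln_2_less_1 by simp
  finally show ?thesis
    using assms(3-6) by linarith
qed

lemma universal_on_tile:
  assumes "100 \<le> R" "V \<subseteq> disk R" "admissible R i j"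
  shows "universal_on (adjG R) (V \<inter> tile R i j) (below_points R V i j)"
  unfolding universal_on_def
proof (intro ballI impI)
  fix t x
  assume t: "t \<in> V \<inter> tile R i j" and x: "x \<in> below_points R V i j" and "x \<noteq> t"
  have i: "real i \<le> 0.9 * R / (2 * ln 2) + 1"
    using assms(1,3) imax_le[of R] unfolding admissible_def by force
  have t_radius: "0 \<le> fst t" "R - 2 * (real i + 1) * ln 2 \<le> fst t" "fst t \<le> R"
      "fst t + 2 * real i * ln 2 \<le> R"
    using t unfolding Int_iff mem_tile mem_disk by auto
  have x_radius: "0 \<le> fst x" "R - 2 * (real i + 1) * ln 2 \<le> fst x" "fst x \<le> R"
    using mem_below_points[OF x] unfolding mem_disk by auto
  have "\<bar>fst t - fst x\<bar> \<le> R - 2"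
    using assms(1) i t_radius x_radius by (intro radial_gap) auto
  moreover have "exp (fst t + fst x) * (snd t - snd x)\<^sup>2 \<le> exp R"
  proof (rule tile_angle_estimate)
    show "\<bar>snd t - snd x\<bar> \<le> 2 * pi / ntiles R i"
      using t mem_below_points(3)[OF x] by (intro sector_width) (auto simp: mem_tile)
  qed (use t_radius x_radius ntiles_pos ntiles_lower in auto)
  ultimately have "hdist (fst t, snd t) (fst x, snd x) \<le> R"
    using t_radius(1) x_radius(1) by (rule hdist_le_of_close[rotated 2])
  then have "hdist t x \<le> R" "hdist x t \<le> R"
    using hdist_sym[of x t] by simp_all
  with \<open>x \<noteq> t\<close> show "adjG R t x \<and> adjG R x t"
    unfolding adjG_def by auto
qed

section \<open>The induction over the levels\<close>

lemma demand_nonneg: "0 \<le> demand R V i j"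
  by (cases i) auto

lemma below_points_cycle_cover:
  assumes "100 \<le> R" "finite V" "V \<subseteq> disk R" "admissible R i j"
  shows "\<exists>Ls. cycle_cover (adjG R) (below_points R V i j) Ls \<and>
    int (length Ls) \<le> demand R V i j + 1 \<and>
    (0 < i \<and> demand R V i j = 0 \<longrightarrow> single_cycle_through (tile R i j) Ls)"
  using assms(4)
proof (induction i arbitrary: j)
  case 0
  define T where "T = V \<inter> tile R 0 j"
  have "below_points R V 0 j = T \<union> {}"
    unfolding T_def using below_points_0[OF "0.prems"] by simp
  moreover have "universal_on (adjG R) T (T \<union> {})"
    using universal_on_tile[OF assms(1,3) "0.prems"] calculation unfolding T_def by simp
  moreover have "cycle_cover (adjG R) {} []" "finite T"
    using assms(2) unfolding cycle_cover_def T_def by auto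
  ultimately obtain Ls where "cycle_cover (adjG R) (below_points R V 0 j) Ls"
    "length Ls \<le> (if 3 \<le> card T then 1 else card T)"
    using cycle_cover_absorb[of "adjG R" "{}" "[]" T] cycle_cover_add_vertices[of "adjG R" "{}" "[]" T]
    by (cases "3 \<le> card T") fastforce+
  moreover have "demand R V 0 j = (if card T \<in> {1, 2} then int (card T) else 0)"
    unfolding T_def by (simp add: Ncount_def)
  ultimately show ?case
    by (intro exI[of _ Ls]) (auto split: if_splits)
next
  case (Suc i)
  define T where "T = V \<inter> tile R (Suc i) j"
  define S where "S = below_points R V i (2 * j) \<union> below_points R V i (2 * j + 1)"
  define c where "c = demand R V i (2 * j) + demand R V i (2 * j + 1)"
  obtain L1 L2 where "cycle_cover (adjG R) (below_points R V i (2 * j)) L1"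
    "cycle_cover (adjG R) (below_points R V i (2 * j + 1)) L2"
    "int (length L1) \<le> demand R V i (2 * j) + 1" "int (length L2) \<le> demand R V i (2 * j + 1) + 1"
    using Suc.IH admissible_children[OF _ Suc.prems] assms(1) by (meson order_trans zero_le_numeral)
  then have "cycle_cover (adjG R) S (L1 @ L2)" "int (length (L1 @ L2)) \<le> c + 2"
    using below_points_children_disjoint
    unfolding S_def c_def cycle_cover_def by auto
  moreover have split: "below_points R V (Suc i) j = T \<union> S"
    using below_points_Suc[OF Suc.prems] unfolding T_def S_def by auto
  moreover have "T \<inter> S = {}"
    using tile_Suc_disjoint_below_points unfolding T_def S_def by blast
  moreover have "universal_on (adjG R) T (T \<union> S)"
    using universal_on_tile[OF assms(1,3) Suc.prems] split unfolding T_def by simp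
  moreover have "finite T" "0 \<le> c"
    using assms(2) demand_nonneg unfolding T_def c_def by (auto intro: add_nonneg_nonneg)
  ultimately obtain Ls where "cycle_cover (adjG R) (below_points R V (Suc i) j) Ls"
    "int (length Ls) \<le> max (c + 3 - int (card T)) 0 + 1"
    "c + 3 \<le> int (card T) \<longrightarrow> single_cycle_through T Ls"
    using cycle_cover_extend[of "adjG R" S "L1 @ L2" T c] by auto
  moreover have "demand R V (Suc i) j = max (c + 3 - int (card T)) 0"
    unfolding c_def T_def by (simp add: Ncount_def)
  moreover have "single_cycle_through T Ls \<Longrightarrow> single_cycle_through (tile R (Suc i) j) Ls"
    unfolding single_cycle_through_def T_def by auto
  ultimately show ?case
    by (intro exI[of _ Ls]) auto
qed

theorem mainTheorem9:
  shows "\<exists>R0. \<forall>R \<ge> R0. \<forall>V. finite V \<and> V \<subseteq> disk R \<longrightarrow>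
     (\<forall>i j. admissible R i j \<longrightarrow>
        (\<exists>k. int k \<le> demand R V i j + 1 \<and> covered_by (adjG R) (below_points R V i j) k) \<and>
        (i > 0 \<and> demand R V i j = 0 \<longrightarrow>
           (\<exists>xs. is_cycle (adjG R) (below_points R V i j) xs \<and>
                 set xs = below_points R V i j \<and>
                 (\<exists>k < length xs. xs ! k \<in> tile R i j \<and>
                                  xs ! ((k + 1) mod length xs) \<in> tile R i j))))"
proof (rule exI[of _ "100::real"], intro allI impI conjI)
  fix R :: real and V i j
  assume "100 \<le> R" "finite V \<and> V \<subseteq> disk R" "admissible R i j"
  then obtain Ls where Ls: "cycle_cover (adjG R) (below_points R V i j) Ls"
    "int (length Ls) \<le> demand R V i j + 1"
    "0 < i \<and> demand R V i j = 0 \<longrightarrow> single_cycle_through (tile R i j) Ls"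
    using below_points_cycle_cover by blast
  then show "\<exists>k. int k \<le> demand R V i j + 1 \<and> covered_by (adjG R) (below_points R V i j) k"
    using cycle_cover_covered_by by blast
  assume "0 < i \<and> demand R V i j = 0"
  with Ls show "\<exists>xs. is_cycle (adjG R) (below_points R V i j) xs \<and> set xs = below_points R V i j \<and>
      (\<exists>k < length xs. xs ! k \<in> tile R i j \<and> xs ! ((k + 1) mod length xs) \<in> tile R i j)"
    by (intro single_cycle_through_is_cycle) auto
qed

end
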